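(* If a graph $G$ has a min-max clique covering that satisfies simple intersection, then the compressed cliques graph of $G$ is unique up to isomorphism; that is, the compressed cliques graphs of $G$ constructed from any two min-max clique coverings of $G$ satisfying simple intersection are isomorphic.
   Context: A clique covering of $G$ is a set of cliques such that every edge lies in at least one of them; $\operatorname{cc}(G)$ is the minimum size of one. A min-max clique covering is a clique covering of size $\operatorname{cc}(G)$ consisting of maximal cliques. It has simple intersection if no three distinct cliques of it have a common vertex. Given such a covering $\{C_1,\dots,C_\ell\}$, for distinct $i,j$ put $C_{i,j}=C_i\cap C_j$ and $C_{i,i}=C_i\setminus\bigcup_{j\ne i}C_j$. The compressed cliques graph with respect to this covering has one vertex $v_{i,j}$ for each non-empty set $C_{i,j}$ (including $i=j$), and $v_{i,j}$, $v_{i',j'}$ are adjacent iff $\{i,j\}\cap\{i',j'\}\neq\emptyset$. *)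

theory Defs
  imports Main
begin

definition graph :: "'a set \<Rightarrow> ('a \<Rightarrow> 'a \<Rightarrow> bool) \<Rightarrow> bool" where
  "graph V E \<longleftrightarrow> finite V \<and> (\<forall>u v. E u v \<longrightarrow> u \<in> V \<and> v \<in> V)
     \<and> (\<forall>u v. E u v \<longrightarrow> E v u) \<and> (\<forall>v. \<not> E v v)"

definition clique :: "'a set \<Rightarrow> ('a \<Rightarrow> 'a \<Rightarrow> bool) \<Rightarrow> 'a set \<Rightarrow> bool" where
  "clique V E C \<longleftrightarrow> C \<subseteq> V \<and> (\<forall>u\<in>C. \<forall>v\<in>C. u \<noteq> v \<longrightarrow> E u v)"

definition maximal_clique :: "'a set \<Rightarrow> ('a \<Rightarrow> 'a \<Rightarrow> bool) \<Rightarrow> 'a set \<Rightarrow> bool" where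
  "maximal_clique V E C \<longleftrightarrow> clique V E C \<and> (\<forall>D. clique V E D \<and> C \<subseteq> D \<longrightarrow> D = C)"

definition clique_covering :: "'a set \<Rightarrow> ('a \<Rightarrow> 'a \<Rightarrow> bool) \<Rightarrow> 'a set set \<Rightarrow> bool" where
  "clique_covering V E \<C> \<longleftrightarrow> finite \<C> \<and> (\<forall>C\<in>\<C>. clique V E C)
     \<and> (\<forall>u v. E u v \<longrightarrow> (\<exists>C\<in>\<C>. u \<in> C \<and> v \<in> C))"

definition cc :: "'a set \<Rightarrow> ('a \<Rightarrow> 'a \<Rightarrow> bool) \<Rightarrow> nat" where
  "cc V E = (LEAST n. \<exists>\<C>. clique_covering V E \<C> \<and> card \<C> = n)"

definition min_max_clique_covering :: "'a set \<Rightarrow> ('a \<Rightarrow> 'a \<Rightarrow> bool) \<Rightarrow> 'a set set \<Rightarrow> bool" where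
  "min_max_clique_covering V E \<C> \<longleftrightarrow> clique_covering V E \<C> \<and> card \<C> = cc V E
     \<and> (\<forall>C\<in>\<C>. maximal_clique V E C)"

definition simple_intersection :: "'a set set \<Rightarrow> bool" where
  "simple_intersection \<C> \<longleftrightarrow>
     (\<forall>A\<in>\<C>. \<forall>B\<in>\<C>. \<forall>C\<in>\<C>. A \<noteq> B \<and> A \<noteq> C \<and> B \<noteq> C \<longrightarrow> A \<inter> B \<inter> C = {})"

definition cpart :: "'a set set \<Rightarrow> 'a set \<Rightarrow> 'a set \<Rightarrow> 'a set" where
  "cpart \<C> C D = (if C = D then C - \<Union>(\<C> - {C}) else C \<inter> D)"

text \<open>Vertices of the compressed cliques graph: the unordered index pairs {C_i, C_j}
  (with i = j allowed, giving a singleton) whose set C_{i,j} is non-empty.\<close>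
definition ccg_verts :: "'a set set \<Rightarrow> 'a set set set" where
  "ccg_verts \<C> = {{C, D} | C D. C \<in> \<C> \<and> D \<in> \<C> \<and> cpart \<C> C D \<noteq> {}}"

definition ccg_adj :: "'a set set \<Rightarrow> 'a set set \<Rightarrow> bool" where
  "ccg_adj p q \<longleftrightarrow> p \<noteq> q \<and> p \<inter> q \<noteq> {}"

definition graph_iso :: "'b set \<Rightarrow> ('b \<Rightarrow> 'b \<Rightarrow> bool) \<Rightarrow> 'c set \<Rightarrow> ('c \<Rightarrow> 'c \<Rightarrow> bool) \<Rightarrow> bool" where
  "graph_iso V1 E1 V2 E2 \<longleftrightarrow> (\<exists>f. bij_betw f V1 V2 \<and> (\<forall>u\<in>V1. \<forall>v\<in>V1. E1 u v \<longleftrightarrow> E2 (f u) (f v)))"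

end

theory Submission
  imports Defs
begin

text \<open>Send a vertex v to the set of cliques containing it. Under simple intersection this set has
  one or two elements, and it is exactly the compressed-cliques vertex of the part C_{i,j} holding v;
  every vertex lies in some clique because a minimum covering has no singleton cliques, so the
  compressed cliques graph is the image of the non-isolated vertices. For maximal cliques covering
  all edges, the cliques at v are those inside the closed neighbourhood of v, and their union is
  that neighbourhood; hence two vertices have the same cliques iff they have the same closed
  neighbourhood, and their cliques meet iff the vertices are equal or adjacent. Both relations are
  intrinsic to G, so the images under any two such coverings are isomorphic.\<close>

definition cliques_at :: "'a set set \<Rightarrow> 'a \<Rightarrow> 'a set set" where
  "cliques_at \<C> v = {C\<in>\<C>. v \<in> C}"

definition closed_nbhd :: "('a \<Rightarrow> 'a \<Rightarrow> bool) \<Rightarrow> 'a \<Rightarrow> 'a set" where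
  "closed_nbhd E v = insert v {u. E v u}"

lemma graph_iso_imageI:
  assumes img1: "g1 ` A = B1" and img2: "g2 ` A = B2"
    and kernel: "\<And>x y. x \<in> A \<Longrightarrow> y \<in> A \<Longrightarrow> g1 x = g1 y \<longleftrightarrow> g2 x = g2 y"
    and rel: "\<And>x y. x \<in> A \<Longrightarrow> y \<in> A \<Longrightarrow> R1 (g1 x) (g1 y) \<longleftrightarrow> R2 (g2 x) (g2 y)"
  shows "graph_iso B1 R1 B2 R2"
proof -
  define f where "f p = g2 (inv_into A g1 p)" for p
  have f_g1: "f (g1 x) = g2 x" if "x \<in> A" for x
    using that kernel[of "inv_into A g1 (g1 x)" x]
    by (simp add: f_def inv_into_into f_inv_into_f)
  have "inj_on f B1"
  proof (rule inj_onI)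
    fix p q assume "p \<in> B1" "q \<in> B1" "f p = f q"
    then obtain x y where "x \<in> A" "y \<in> A" "p = g1 x" "q = g1 y"
      using img1 by blast
    with \<open>f p = f q\<close> show "p = q" using f_g1 kernel by metis
  qed
  moreover have "f ` B1 = B2"
    using img1 img2 f_g1 by (force simp: image_iff)
  ultimately have "bij_betw f B1 B2"
    by (simp add: bij_betw_def)
  moreover have "R1 p q \<longleftrightarrow> R2 (f p) (f q)" if "p \<in> B1" "q \<in> B1" for p q
    using that img1 f_g1 rel by auto
  ultimately show ?thesis
    unfolding graph_iso_def by blast
qed

lemma cliques_at_pair:
  assumes "simple_intersection \<C>" "C \<in> \<C>" "D \<in> \<C>" "C \<noteq> D" "v \<in> C" "v \<in> D"
  shows "cliques_at \<C> v = {C, D}"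
  using assms unfolding cliques_at_def simple_intersection_def by blast

lemma cliques_at_private:
  assumes "C \<in> \<C>" "v \<in> cpart \<C> C C"
  shows "cliques_at \<C> v = {C}"
  using assms by (auto simp: cliques_at_def cpart_def)

lemma ccg_verts_eq_image_cliques_at:
  assumes si: "simple_intersection \<C>"
  shows "ccg_verts \<C> = cliques_at \<C> ` \<Union>\<C>"
proof
  show "ccg_verts \<C> \<subseteq> cliques_at \<C> ` \<Union>\<C>"
  proof
    fix p assume "p \<in> ccg_verts \<C>"
    then obtain C D v where p: "p = {C, D}" "C \<in> \<C>" "D \<in> \<C>" and v: "v \<in> cpart \<C> C D"
      by (auto simp: ccg_verts_def)
    have "cliques_at \<C> v = p \<and> v \<in> C"
    proof (cases "C = D")
      case True
      then show ?thesis using cliques_at_private[OF p(2)] v p(1) by (auto simp: cpart_def)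
    next
      case False
      then show ?thesis using cliques_at_pair[OF si p(2,3)] v p(1) by (auto simp: cpart_def)
    qed
    then show "p \<in> cliques_at \<C> ` \<Union>\<C>" using p(2) by blast
  qed
next
  show "cliques_at \<C> ` \<Union>\<C> \<subseteq> ccg_verts \<C>"
  proof
    fix p assume "p \<in> cliques_at \<C> ` \<Union>\<C>"
    then obtain C v where p: "p = cliques_at \<C> v" and C: "C \<in> \<C>" "v \<in> C" by blast
    show "p \<in> ccg_verts \<C>"
    proof (cases "\<exists>D\<in>\<C>. D \<noteq> C \<and> v \<in> D")
      case True
      then obtain D where D: "D \<in> \<C>" "D \<noteq> C" "v \<in> D" by blast
      then have "p = {C, D}" "v \<in> cpart \<C> C D"
        using cliques_at_pair[OF si C(1) D(1)] p C by (auto simp: cpart_def)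
      then show ?thesis using C D unfolding ccg_verts_def by blast
    next
      case False
      then have "p = {C, C}" "v \<in> cpart \<C> C C"
        using p C by (auto simp: cliques_at_def cpart_def)
      then show ?thesis using C unfolding ccg_verts_def by blast
    qed
  qed
qed

lemma min_clique_covering_not_isolated:
  assumes g: "graph V E" and cov: "clique_covering V E \<C>" and min: "card \<C> = cc V E"
    and C: "C \<in> \<C>" "v \<in> C"
  shows "\<exists>u. E v u"
proof (rule ccontr)
  assume isolated: "\<nexists>u. E v u"
  have fin: "finite \<C>" using cov by (simp add: clique_covering_def)
  have "clique V E C" using cov C by (simp add: clique_covering_def)
  then have C_eq: "C = {v}" using C isolated by (auto simp: clique_def)
  have "clique_covering V E (\<C> - {C})"
  proof -
    have "\<exists>D\<in>\<C> - {C}. a \<in> D \<and> b \<in> D" if "E a b" for a b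
    proof -
      obtain D where "D \<in> \<C>" "a \<in> D" "b \<in> D"
        using cov \<open>E a b\<close> unfolding clique_covering_def by blast
      moreover have "a \<noteq> b" using g \<open>E a b\<close> by (auto simp: graph_def)
      ultimately show ?thesis using C_eq by blast
    qed
    then show ?thesis using cov fin by (simp add: clique_covering_def)
  qed
  then have "cc V E \<le> card (\<C> - {C})"
    unfolding cc_def by (intro Least_le) blast
  moreover have "card (\<C> - {C}) < card \<C>"
    using fin C(1) by (rule card_Diff1_less)
  ultimately show False using min by simp
qed

lemma Union_min_clique_covering:
  assumes "graph V E" "clique_covering V E \<C>" "card \<C> = cc V E"
  shows "\<Union>\<C> = {v. \<exists>u. E v u}"
  using min_clique_covering_not_isolated[OF assms] assms(2)
  by (fastforce simp: clique_covering_def)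

lemma cliques_at_eq_contained_in_closed_nbhd:
  assumes g: "graph V E" and maximal: "\<forall>C\<in>\<C>. maximal_clique V E C" and v: "v \<in> V"
  shows "cliques_at \<C> v = {C\<in>\<C>. C \<subseteq> closed_nbhd E v}"
proof (intro equalityI subsetI)
  fix C assume "C \<in> cliques_at \<C> v"
  then have "C \<in> \<C>" "v \<in> C" by (auto simp: cliques_at_def)
  moreover from this have "clique V E C" using maximal by (simp add: maximal_clique_def)
  ultimately show "C \<in> {C\<in>\<C>. C \<subseteq> closed_nbhd E v}"
    by (auto simp: clique_def closed_nbhd_def)
next
  fix C assume "C \<in> {C\<in>\<C>. C \<subseteq> closed_nbhd E v}"
  then have C: "C \<in> \<C>" "C \<subseteq> closed_nbhd E v" by auto
  then have "maximal_clique V E C" using maximal by blast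
  have "E x y \<Longrightarrow> E y x" for x y using g by (simp add: graph_def)
  moreover have "clique V E C" using \<open>maximal_clique V E C\<close> by (simp add: maximal_clique_def)
  ultimately have "clique V E (insert v C)"
    using C(2) v unfolding clique_def closed_nbhd_def by blast
  then have "insert v C = C" using \<open>maximal_clique V E C\<close> by (auto simp: maximal_clique_def)
  then show "C \<in> cliques_at \<C> v" using C(1) by (auto simp: cliques_at_def)
qed

lemma closed_nbhd_eq_Union_cliques_at:
  assumes cov: "clique_covering V E \<C>" and v: "\<exists>u. E v u"
  shows "closed_nbhd E v = \<Union>(cliques_at \<C> v)"
proof (intro equalityI subsetI)
  fix u assume "u \<in> closed_nbhd E v"
  then obtain a where "E v a" "u = v \<or> u = a"
    using v by (auto simp: closed_nbhd_def)
  moreover from \<open>E v a\<close> obtain C where "C \<in> \<C>" "v \<in> C" "a \<in> C"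
    using cov unfolding clique_covering_def by blast
  ultimately show "u \<in> \<Union>(cliques_at \<C> v)" by (auto simp: cliques_at_def)
next
  fix u assume "u \<in> \<Union>(cliques_at \<C> v)"
  then obtain C where "C \<in> \<C>" "v \<in> C" "u \<in> C" by (auto simp: cliques_at_def)
  moreover from \<open>C \<in> \<C>\<close> have "clique V E C" using cov by (simp add: clique_covering_def)
  ultimately show "u \<in> closed_nbhd E v" by (auto simp: clique_def closed_nbhd_def)
qed

lemma cliques_at_eq_iff_closed_nbhd_eq:
  assumes g: "graph V E" and m: "min_max_clique_covering V E \<C>"
    and v: "\<exists>u. E v u" and w: "\<exists>u. E w u"
  shows "cliques_at \<C> v = cliques_at \<C> w \<longleftrightarrow> closed_nbhd E v = closed_nbhd E w"
proof -
  have cov: "clique_covering V E \<C>" and maximal: "\<forall>C\<in>\<C>. maximal_clique V E C"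
    using m by (auto simp: min_max_clique_covering_def)
  have "v \<in> V" "w \<in> V" using g v w by (auto simp: graph_def)
  note cliques = cliques_at_eq_contained_in_closed_nbhd[OF g maximal this(1)]
    cliques_at_eq_contained_in_closed_nbhd[OF g maximal this(2)]
  note nbhds = closed_nbhd_eq_Union_cliques_at[OF cov v] closed_nbhd_eq_Union_cliques_at[OF cov w]
  show ?thesis
  proof
    assume "cliques_at \<C> v = cliques_at \<C> w"
    then show "closed_nbhd E v = closed_nbhd E w" using nbhds by simp
  next
    assume "closed_nbhd E v = closed_nbhd E w"
    then show "cliques_at \<C> v = cliques_at \<C> w" using cliques by simp
  qed
qed

lemma cliques_at_meet_iff:
  assumes cov: "clique_covering V E \<C>" and v: "\<exists>u. E v u"
  shows "cliques_at \<C> v \<inter> cliques_at \<C> w \<noteq> {} \<longleftrightarrow> v = w \<or> E v w"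
proof
  assume "cliques_at \<C> v \<inter> cliques_at \<C> w \<noteq> {}"
  then obtain C where "C \<in> \<C>" "v \<in> C" "w \<in> C" by (auto simp: cliques_at_def)
  then show "v = w \<or> E v w" using cov by (auto simp: clique_covering_def clique_def)
next
  assume "v = w \<or> E v w"
  then obtain u where "E v u" "v = w \<or> u = w" using v by blast
  then show "cliques_at \<C> v \<inter> cliques_at \<C> w \<noteq> {}"
    using cov by (fastforce simp: clique_covering_def cliques_at_def)
qed

lemma ccg_adj_cliques_at_iff:
  assumes g: "graph V E" and m: "min_max_clique_covering V E \<C>"
    and v: "\<exists>u. E v u" and w: "\<exists>u. E w u"
  shows "ccg_adj (cliques_at \<C> v) (cliques_at \<C> w) \<longleftrightarrow>
    closed_nbhd E v \<noteq> closed_nbhd E w \<and> E v w"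
proof -
  have "clique_covering V E \<C>" using m by (simp add: min_max_clique_covering_def)
  from cliques_at_meet_iff[OF this v, of w] show ?thesis
    using cliques_at_eq_iff_closed_nbhd_eq[OF g m v w] unfolding ccg_adj_def by auto
qed

lemma ccg_verts_eq_image_non_isolated:
  assumes "graph V E" "min_max_clique_covering V E \<C>" "simple_intersection \<C>"
  shows "ccg_verts \<C> = cliques_at \<C> ` {v. \<exists>u. E v u}"
  using assms ccg_verts_eq_image_cliques_at Union_min_clique_covering
  by (metis min_max_clique_covering_def)

theorem mainTheorem3:
  fixes V :: "'a set" and E :: "'a \<Rightarrow> 'a \<Rightarrow> bool" and \<C>1 \<C>2 :: "'a set set"
  assumes "graph V E"
    and "min_max_clique_covering V E \<C>1" and "simple_intersection \<C>1"
    and "min_max_clique_covering V E \<C>2" and "simple_intersection \<C>2"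
  shows "graph_iso (ccg_verts \<C>1) ccg_adj (ccg_verts \<C>2) ccg_adj"
proof (rule graph_iso_imageI)
  let ?A = "{v. \<exists>u. E v u}"
  show "cliques_at \<C>1 ` ?A = ccg_verts \<C>1" "cliques_at \<C>2 ` ?A = ccg_verts \<C>2"
    using ccg_verts_eq_image_non_isolated assms by metis+
  fix v w assume "v \<in> ?A" "w \<in> ?A"
  then have v: "\<exists>u. E v u" and w: "\<exists>u. E w u" by simp_all
  show "cliques_at \<C>1 v = cliques_at \<C>1 w \<longleftrightarrow> cliques_at \<C>2 v = cliques_at \<C>2 w"
    and "ccg_adj (cliques_at \<C>1 v) (cliques_at \<C>1 w) \<longleftrightarrow>
      ccg_adj (cliques_at \<C>2 v) (cliques_at \<C>2 w)"
    using cliques_at_eq_iff_closed_nbhd_eq[OF assms(1) _ v w] ccg_adj_cliques_at_iff[OF assms(1) _ v w]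
      assms(2,4) by simp_all
qed

end
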